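(* If $\widehat{\mathcal T}_\bullet$ is an admissible hierarchical mesh, then ${\tt refine}(\widehat{\mathcal T}_\bullet)$ coincides with the set of all admissible hierarchical meshes $\widehat{\mathcal T}_\circ$ that are finer than $\widehat{\mathcal T}_\bullet$ (i.e. $\widehat\Omega^k_\bullet\subseteq\widehat\Omega^k_\circ$ for all $k$). In particular, the set of admissible meshes equals ${\tt refine}(\widehat{\mathcal T}^0)$.
   Context: Parameter domain $\widehat\Omega=(0,1)^d$, $d\ge2$; degrees $p_1,\dots,p_d\ge1$. For each $i$, $\widehat{\mathcal K}^0_i$ is a $p_i$-open knot vector in $[0,1]$ (first $p_i+1$ knots $0$, last $p_i+1$ knots $1$, interior multiplicities $\le p_i$); $\widehat{\mathcal K}^{k+1}_i$ arises from $\widehat{\mathcal K}^k_i$ by inserting each nondegenerate span's midpoint once. $\widehat{\mathcal B}^k$: tensor-product B-splines of degree $(p_1,\dots,p_d)$ for $\widehat{\mathcal K}^k$; $\widehat{\mathcal T}^k$: closed cells of level $k$. A hierarchical mesh is given by closed sets $[0,1]^d=\widehat\Omega^0_\bullet\supseteq\widehat\Omega^1_\bullet\supseteq\cdots$, each $\widehat\Omega^k_\bullet$ ($k\ge1$) a union of cells of $\widehat{\mathcal T}^{k-1}$, eventually empty; mesh $\widehat{\mathcal T}_\bullet=\bigcup_k\{\widehat T\in\widehat{\mathcal T}^k:\widehat T\subseteq\widehat\Omega^k_\bullet,\widehat T\not\subseteq\widehat\Omega^{k+1}_\bullet\}$, ${\rm level}(\widehat T)=k$; hierarchical basis $\widehat{\mathcal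 H}_\bullet=\bigcup_k\{\widehat\beta\in\widehat{\mathcal B}^k:{\rm supp}\,\widehat\beta\subseteq\widehat\Omega^k_\bullet,{\rm supp}\,\widehat\beta\not\subseteq\widehat\Omega^{k+1}_\bullet\}$. Neighbors $\mathcal N_\bullet(\widehat T)=\{\widehat T'\in\widehat{\mathcal T}_\bullet:\exists\widehat\beta\in\widehat{\mathcal H}_\bullet,\widehat T,\widehat T'\subseteq{\rm supp}\,\widehat\beta\}$; bad neighbors $\mathcal N^{\rm bad}_\bullet(\widehat T)=\{\widehat T'\in\mathcal N_\bullet(\widehat T):{\rm level}(\widehat T')={\rm level}(\widehat T)-1\}$. Admissible: $|{\rm level}(\widehat T)-{\rm level}(\widehat T')|\le1$ whenever $\widehat T'\in\mathcal N_\bullet(\widehat T)$. ${\tt refine}(\widehat{\mathcal T}_\bullet,\widehat{\mathcal M})$ for $\widehat{\mathcal M}\subseteq\widehat{\mathcal T}_\bullet$: $\widehat{\mathcal M}^{(0)}=\widehat{\mathcal M}$, $\widehat{\mathcal M}^{(i+1)}=\widehat{\mathcal M}^{(i)}\cup\bigcup_{\widehat T\in\widehat{\mathcal M}^{(i)}}\mathcal N^{\rm bad}_\bullet(\widehat T)$ until stationary; each $\widehat T$ in the final set is added to $\widehat\Omega^{{\rm level}(\widehat T)+1}$ (dyadic bisection), giving the new mesh. ${\tt refine}(\widehat{\mathcal T}_\bullet)$ is the set of meshes obtained from $\widehat{\mathcal T}_\bullet$ by finitely many (possibly zero) such refinement steps. *)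

theory Defs
  imports "HOL-Analysis.Analysis"
begin

text \<open>Knot vectors are lists of reals; a B-spline of a given level is identified by its
  multi-index j (one index per direction), its support being the box spanned by the
  knots t_{j_i} and t_{j_i+p_i+1} in each direction.  A hierarchical mesh is
  represented by its sequence of nested domains Omega^k.\<close>

definition open_knots :: "nat \<Rightarrow> real list \<Rightarrow> bool" where
  "open_knots q K \<longleftrightarrow> sorted K \<and> 2 * (q + 1) \<le> length K
     \<and> (\<forall>i\<le>q. K ! i = 0 \<and> K ! (length K - 1 - i) = 1)
     \<and> (\<forall>i. q < i \<and> i < length K - 1 - q \<longrightarrow> 0 < K ! i \<and> K ! i < 1)
     \<and> (\<forall>t. 0 < t \<and> t < 1 \<longrightarrow> count_list K t \<le> q)"

definition refine_knots :: "real list \<Rightarrow> real list" where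
  "refine_knots K = sort (K @ map (\<lambda>i. (K ! i + K ! Suc i) / 2)
       (filter (\<lambda>i. K ! i < K ! Suc i) [0..<length K - 1]))"

definition knots :: "('d \<Rightarrow> real list) \<Rightarrow> nat \<Rightarrow> 'd \<Rightarrow> real list" where
  "knots K0 k i = (refine_knots ^^ k) (K0 i)"

definition cells :: "('d::finite \<Rightarrow> real list) \<Rightarrow> nat \<Rightarrow> (real^'d) set set" where
  "cells K0 k = {cbox (\<chi> i. knots K0 k i ! m i) (\<chi> i. knots K0 k i ! Suc (m i)) | m.
      \<forall>i. Suc (m i) < length (knots K0 k i) \<and> knots K0 k i ! m i < knots K0 k i ! Suc (m i)}"

definition bspl :: "('d \<Rightarrow> nat) \<Rightarrow> ('d \<Rightarrow> real list) \<Rightarrow> nat \<Rightarrow> ('d \<Rightarrow> nat) set" where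
  "bspl p K0 k = {j. \<forall>i. j i + p i + 1 < length (knots K0 k i)}"

definition supp_b :: "('d::finite \<Rightarrow> nat) \<Rightarrow> ('d \<Rightarrow> real list) \<Rightarrow> nat \<Rightarrow> ('d \<Rightarrow> nat) \<Rightarrow> (real^'d) set" where
  "supp_b p K0 k j = cbox (\<chi> i. knots K0 k i ! j i) (\<chi> i. knots K0 k i ! (j i + p i + 1))"

definition unit_cube :: "(real^'d::finite) set" where
  "unit_cube = cbox (\<chi> i. 0) (\<chi> i. 1)"

definition hier_mesh :: "('d::finite \<Rightarrow> real list) \<Rightarrow> (nat \<Rightarrow> (real^'d) set) \<Rightarrow> bool" where
  "hier_mesh K0 \<Omega> \<longleftrightarrow> \<Omega> 0 = unit_cube \<and> (\<forall>k. \<Omega> (Suc k) \<subseteq> \<Omega> k)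
     \<and> (\<forall>k. \<exists>S \<subseteq> cells K0 k. \<Omega> (Suc k) = \<Union>S) \<and> (\<exists>N. \<forall>k\<ge>N. \<Omega> k = {})"

definition mesh :: "('d::finite \<Rightarrow> real list) \<Rightarrow> (nat \<Rightarrow> (real^'d) set) \<Rightarrow> (nat \<times> (real^'d) set) set" where
  "mesh K0 \<Omega> = {(k, T). T \<in> cells K0 k \<and> T \<subseteq> \<Omega> k \<and> \<not> T \<subseteq> \<Omega> (Suc k)}"

definition hbasis :: "('d::finite \<Rightarrow> nat) \<Rightarrow> ('d \<Rightarrow> real list) \<Rightarrow> (nat \<Rightarrow> (real^'d) set) \<Rightarrow> (nat \<times> ('d \<Rightarrow> nat)) set" where
  "hbasis p K0 \<Omega> = {(k, j). j \<in> bspl p K0 k \<and> supp_b p K0 k j \<subseteq> \<Omega> k \<and> \<not> supp_b p K0 k j \<subseteq> \<Omega> (Suc k)}"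

definition neighbors :: "('d::finite \<Rightarrow> nat) \<Rightarrow> ('d \<Rightarrow> real list) \<Rightarrow> (nat \<Rightarrow> (real^'d) set)
    \<Rightarrow> nat \<times> (real^'d) set \<Rightarrow> (nat \<times> (real^'d) set) set" where
  "neighbors p K0 \<Omega> kT = {kT' \<in> mesh K0 \<Omega>. \<exists>(l, j) \<in> hbasis p K0 \<Omega>.
       snd kT \<subseteq> supp_b p K0 l j \<and> snd kT' \<subseteq> supp_b p K0 l j}"

definition bad_neighbors :: "('d::finite \<Rightarrow> nat) \<Rightarrow> ('d \<Rightarrow> real list) \<Rightarrow> (nat \<Rightarrow> (real^'d) set)
    \<Rightarrow> nat \<times> (real^'d) set \<Rightarrow> (nat \<times> (real^'d) set) set" where
  "bad_neighbors p K0 \<Omega> kT = {kT' \<in> neighbors p K0 \<Omega> kT. fst kT' + 1 = fst kT}"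

definition admissible :: "('d::finite \<Rightarrow> nat) \<Rightarrow> ('d \<Rightarrow> real list) \<Rightarrow> (nat \<Rightarrow> (real^'d) set) \<Rightarrow> bool" where
  "admissible p K0 \<Omega> \<longleftrightarrow> hier_mesh K0 \<Omega> \<and>
     (\<forall>kT \<in> mesh K0 \<Omega>. \<forall>kT' \<in> neighbors p K0 \<Omega> kT. fst kT \<le> fst kT' + 1 \<and> fst kT' \<le> fst kT + 1)"

primrec marked_iter :: "('d::finite \<Rightarrow> nat) \<Rightarrow> ('d \<Rightarrow> real list) \<Rightarrow> (nat \<Rightarrow> (real^'d) set)
    \<Rightarrow> (nat \<times> (real^'d) set) set \<Rightarrow> nat \<Rightarrow> (nat \<times> (real^'d) set) set" where
  "marked_iter p K0 \<Omega> M 0 = M"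
| "marked_iter p K0 \<Omega> M (Suc i) =
     marked_iter p K0 \<Omega> M i \<union> \<Union> (bad_neighbors p K0 \<Omega> ` marked_iter p K0 \<Omega> M i)"

definition marked_closure :: "('d::finite \<Rightarrow> nat) \<Rightarrow> ('d \<Rightarrow> real list) \<Rightarrow> (nat \<Rightarrow> (real^'d) set)
    \<Rightarrow> (nat \<times> (real^'d) set) set \<Rightarrow> (nat \<times> (real^'d) set) set" where
  "marked_closure p K0 \<Omega> M = (\<Union>i. marked_iter p K0 \<Omega> M i)"

definition refine_step :: "('d::finite \<Rightarrow> nat) \<Rightarrow> ('d \<Rightarrow> real list) \<Rightarrow> (nat \<Rightarrow> (real^'d) set)
    \<Rightarrow> (nat \<times> (real^'d) set) set \<Rightarrow> nat \<Rightarrow> (real^'d) set" where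
  "refine_step p K0 \<Omega> M k = (case k of 0 \<Rightarrow> \<Omega> 0
     | Suc l \<Rightarrow> \<Omega> (Suc l) \<union> \<Union> {T. (l, T) \<in> marked_closure p K0 \<Omega> M})"

definition refine_rel :: "('d::finite \<Rightarrow> nat) \<Rightarrow> ('d \<Rightarrow> real list) \<Rightarrow> (nat \<Rightarrow> (real^'d) set)
    \<Rightarrow> (nat \<Rightarrow> (real^'d) set) \<Rightarrow> bool" where
  "refine_rel p K0 \<Omega> \<Omega>' \<longleftrightarrow> (\<exists>M \<subseteq> mesh K0 \<Omega>. \<Omega>' = refine_step p K0 \<Omega> M)"

definition refinements :: "('d::finite \<Rightarrow> nat) \<Rightarrow> ('d \<Rightarrow> real list) \<Rightarrow> (nat \<Rightarrow> (real^'d) set)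
    \<Rightarrow> (nat \<Rightarrow> (real^'d) set) set" where
  "refinements p K0 \<Omega> = {\<Omega>'. (refine_rel p K0)\<^sup>*\<^sup>* \<Omega> \<Omega>'}"

definition initial_mesh :: "nat \<Rightarrow> (real^'d::finite) set" where
  "initial_mesh k = (if k = 0 then unit_cube else {})"

end

theory Submission
  imports Defs
begin

text \<open>One refinement step keeps a mesh admissible: because the marked set is closed under bad
  neighbours, an element refined to level k+1 never shares a basis function with an element of
  level k-1. Since refinement only enlarges the domains, every mesh in refine(T) is an admissible
  refinement of T. Conversely, if T' is admissible and finer than T, the elements of T that T'
  refines are already closed under bad neighbours (otherwise T' would not be admissible), so
  refining exactly them is a legal step that stays below T'; it strictly decreases the finite set
  of cells refined in T' but not yet in T, hence T' is reached after finitely many steps.\<close>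

definition knot_span :: "real list \<Rightarrow> real \<Rightarrow> real \<Rightarrow> bool" where
  "knot_span T c d \<longleftrightarrow> c \<in> set T \<and> d \<in> set T \<and> c < d \<and> (\<forall>y\<in>set T. y \<le> c \<or> d \<le> y)"

lemma knot_span_nth:
  assumes "sorted T" "Suc m < length T" "T ! m < T ! Suc m"
  shows "knot_span T (T ! m) (T ! Suc m)"
proof -
  have "y \<le> T ! m \<or> T ! Suc m \<le> y" if "y \<in> set T" for y
  proof -
    obtain i where "i < length T" "y = T ! i" using \<open>y \<in> set T\<close> by (auto simp: in_set_conv_nth)
    then show ?thesis using assms by (cases "i \<le> m") (auto intro: sorted_nth_mono)
  qed
  then show ?thesis using assms by (auto simp: knot_span_def)
qed

lemma knot_span_obtain_nth:
  assumes "sorted T" "knot_span T c d"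
  obtains m where "Suc m < length T" "T ! m = c" "T ! Suc m = d"
proof -
  let ?I = "{i. i < length T \<and> T ! i = c}"
  define m where "m = Max ?I"
  have m: "m \<in> ?I" unfolding m_def using assms(2)
    by (intro Max_in) (auto simp: knot_span_def in_set_conv_nth)
  obtain i where i: "i < length T" "T ! i = d"
    using assms(2) by (auto simp: knot_span_def in_set_conv_nth)
  have "m < i"
    using sorted_nth_mono[OF assms(1), of i m] m i assms(2) by (force simp: knot_span_def)
  then have Sm: "Suc m < length T" using i by simp
  have "T ! Suc m \<noteq> c"
    using Max_ge[of ?I "Suc m"] Sm unfolding m_def[symmetric] by auto
  then have "c < T ! Suc m" using m sorted_nth_mono[OF assms(1), of m "Suc m"] Sm by force
  moreover have "T ! Suc m \<le> d" using sorted_nth_mono[OF assms(1), of "Suc m" i] \<open>m < i\<close> i by simp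
  moreover have "T ! Suc m \<le> c \<or> d \<le> T ! Suc m" using assms(2) Sm by (simp add: knot_span_def)
  ultimately have "T ! Suc m = d" by linarith
  then show ?thesis using that Sm m by blast
qed

lemma knot_span_next:
  assumes "c \<in> set T" "y \<in> set T" "c < y"
  shows "knot_span T c (Min {y \<in> set T. c < y})" and "Min {y \<in> set T. c < y} \<le> y"
proof -
  let ?S = "{y \<in> set T. c < y}"
  have "Min ?S \<in> ?S" using assms by (intro Min_in) auto
  then show "knot_span T c (Min ?S)"
    using assms(1) by (auto simp: knot_span_def not_le intro: Min_le)
  show "Min ?S \<le> y" using assms by (intro Min_le) auto
qed

lemma knot_span_shrink:
  assumes "knot_span T c d" "set T \<subseteq> set T'"
  shows "\<exists>d'. knot_span T' c d' \<and> d' \<le> d"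
proof -
  have "c \<in> set T'" "d \<in> set T'" "c < d" using assms by (auto simp: knot_span_def)
  then show ?thesis using knot_span_next[of c T' d] by blast
qed

lemma knot_span_cover:
  assumes "a \<in> set T" "b \<in> set T" "a < b" "a \<le> x" "x \<le> b"
  obtains c d where "knot_span T c d" "a \<le> c" "d \<le> b" "c \<le> x" "x \<le> d"
proof -
  let ?L = "{y \<in> set T. y \<le> x \<and> y < b}"
  define c where "c = Max ?L"
  have c: "c \<in> set T" "c \<le> x" "c < b" "a \<le> c"
    using Max_in[of ?L] Max_ge[of ?L a] assms unfolding c_def[symmetric] by auto
  define d where "d = Min {y \<in> set T. c < y}"
  have span: "knot_span T c d" and "d \<le> b"
    using knot_span_next[OF c(1) assms(2) c(3)] unfolding d_def by auto
  moreover have "x \<le> d"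
  proof (rule ccontr)
    assume "\<not> x \<le> d"
    then have "d \<le> c" using span \<open>d \<le> b\<close> assms(5) Max_ge[of ?L d]
      unfolding c_def[symmetric] knot_span_def by (cases "d < b") auto
    then show False using span by (simp add: knot_span_def)
  qed
  ultimately show ?thesis using that c by blast
qed

lemma knot_span_dichotomy:
  assumes "knot_span T c d" "a \<in> set T" "b \<in> set T"
  shows "(a \<le> c \<and> d \<le> b) \<or> b \<le> c \<or> d \<le> a"
  using assms unfolding knot_span_def by force

text \<open>The part of openness of a knot vector that survives midpoint refinement and is all the
  argument needs.\<close>

definition knot_vector :: "nat \<Rightarrow> real list \<Rightarrow> bool" where
  "knot_vector q t \<longleftrightarrow> sorted t \<and> set t \<subseteq> {0..1} \<and> 0 \<in> set t \<and> q + 1 \<le> count_list t 1"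

lemma count_list_conv_card: "count_list xs y = card {i. i < length xs \<and> xs ! i = y}"
  unfolding count_list_eq_length_filter length_filter_conv_card by (metis (full_types))

lemma open_knots_imp_knot_vector:
  assumes "open_knots q K" shows "knot_vector q K"
proof -
  let ?n = "length K"
  have sorted: "sorted K" and len: "2 * (q + 1) \<le> ?n"
    and ends: "\<And>i. i \<le> q \<Longrightarrow> K ! i = 0 \<and> K ! (?n - 1 - i) = 1"
    and inner: "\<And>i. q < i \<Longrightarrow> i < ?n - 1 - q \<Longrightarrow> 0 < K ! i \<and> K ! i < 1"
    using assms unfolding open_knots_def by auto
  have "K ! i \<in> {0..1}" if "i < ?n" for i
  proof (cases "i \<le> q")
    case True
    then show ?thesis using ends[of i] by simp
  next
    case False
    show ?thesis
    proof (cases "i < ?n - 1 - q")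
      case True
      then show ?thesis using inner[of i] False by simp
    next
      case outer: False
      have "?n - 1 - (?n - 1 - i) = i" using that by simp
      then show ?thesis using ends[of "?n - 1 - i"] outer that by simp
    qed
  qed
  then have "set K \<subseteq> {0..1}" by (auto simp: in_set_conv_nth)
  moreover have "0 \<in> set K"
  proof -
    have "0 < ?n" using len by (cases ?n) auto
    then show ?thesis using ends[of 0] nth_mem[of 0 K] by simp
  qed
  moreover have "q + 1 \<le> count_list K 1"
  proof -
    have "(\<lambda>i. ?n - 1 - i) ` {..q} \<subseteq> {i. i < ?n \<and> K ! i = 1}" using ends len by auto
    then have "card ((\<lambda>i. ?n - 1 - i) ` {..q}) \<le> card {i. i < ?n \<and> K ! i = 1}"
      by (intro card_mono) auto
    moreover have "inj_on (\<lambda>i. ?n - 1 - i) {..q}" using len by (auto simp: inj_on_def)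
    ultimately have "card {..q} \<le> card {i. i < ?n \<and> K ! i = 1}" by (simp add: card_image)
    then show ?thesis by (simp add: count_list_conv_card)
  qed
  ultimately show ?thesis using sorted unfolding knot_vector_def by blast
qed

lemma mset_refine_knots:
  "mset (refine_knots K) = mset K + mset (map (\<lambda>i. (K ! i + K ! Suc i) / 2)
     (filter (\<lambda>i. K ! i < K ! Suc i) [0..<length K - 1]))"
  by (simp add: refine_knots_def)

lemma set_refine_knots_subset: "set K \<subseteq> set (refine_knots K)"
  using mset_refine_knots[of K] by (metis Un_upper1 set_mset_mset set_mset_union)

lemma knot_vector_refine_knots:
  assumes "knot_vector q K" shows "knot_vector q (refine_knots K)"
proof -
  have "(K ! i + K ! Suc i) / 2 \<in> {0..1}" if "i < length K - 1" for i
  proof -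
    have "K ! i \<in> set K" "K ! Suc i \<in> set K" using that by auto
    then have "K ! i \<in> {0..1}" "K ! Suc i \<in> {0..1}" using assms by (auto simp: knot_vector_def)
    then show ?thesis by simp
  qed
  then have "set (refine_knots K) \<subseteq> {0..1}"
    using assms by (auto simp: refine_knots_def knot_vector_def)
  moreover have "count_list K 1 \<le> count_list (refine_knots K) 1"
    using mset_refine_knots[of K] by (simp flip: count_mset)
  ultimately show ?thesis
    using assms set_refine_knots_subset[of K] by (auto simp: knot_vector_def refine_knots_def)
qed

lemma sorted_count_between:
  assumes "sorted xs" "j + Suc r < length xs"
  shows "length (filter (\<lambda>x. xs ! j < x \<and> x < xs ! (j + Suc r)) xs) \<le> r"
proof -
  have "{i. i < length xs \<and> xs ! j < xs ! i \<and> xs ! i < xs ! (j + Suc r)} \<subseteq> {j<..<j + Suc r}"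
  proof safe
    fix i assume "i < length xs" "xs ! j < xs ! i" "xs ! i < xs ! (j + Suc r)"
    then show "i \<in> {j<..<j + Suc r}"
      using sorted_nth_mono[OF assms(1), of i j] sorted_nth_mono[OF assms(1), of "j + Suc r" i] assms(2)
      by (cases "j < i"; cases "i < j + Suc r") auto
  qed
  then have "card {i. i < length xs \<and> xs ! j < xs ! i \<and> xs ! i < xs ! (j + Suc r)} \<le> r"
    using card_mono[of "{j<..<j + Suc r}"] by fastforce
  then show ?thesis by (simp add: length_filter_conv_card)
qed

lemma knot_vector_last_knot_below:
  assumes t: "knot_vector q t" and a: "0 \<le> a" "a < 1"
  obtains j' where "j' + q + 1 < length t" "t ! j' \<le> a" "\<And>i. i < length t \<Longrightarrow> a < t ! i \<longleftrightarrow> j' < i"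
proof -
  let ?I = "{i. i < length t \<and> t ! i \<le> a}"
  have s: "sorted t" using t by (simp add: knot_vector_def)
  obtain i0 where "i0 < length t" "t ! i0 = 0" using t by (auto simp: knot_vector_def in_set_conv_nth)
  then have "i0 \<in> ?I" using a by simp
  have fin: "finite ?I" by simp
  define j' where "j' = Max ?I"
  have j': "j' \<in> ?I" unfolding j'_def using \<open>i0 \<in> ?I\<close> by (intro Max_in) auto
  have above: "a < t ! i \<longleftrightarrow> j' < i" if "i < length t" for i
    using that Max_ge[OF fin, of i] sorted_nth_mono[OF s, of i j'] j' unfolding j'_def[symmetric]
    by (cases "j' < i") (auto simp: not_le[symmetric])
  have "{i. i < length t \<and> t ! i = 1} \<subseteq> {j'<..<length t}" using above a by fastforce
  then have "card {i. i < length t \<and> t ! i = 1} \<le> length t - Suc j'"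
    by (metis card_greaterThanLessThan card_mono finite_greaterThanLessThan)
  moreover have "q + 1 \<le> card {i. i < length t \<and> t ! i = 1}"
    using t by (simp add: knot_vector_def count_list_conv_card)
  ultimately have "j' + q + 1 < length t" by linarith
  then show ?thesis using that j' above by blast
qed

text \<open>Starting from the last coarse knot at or below the left end of the finer support: at most q
  finer knots, hence at most q coarse knots, lie strictly inside that support, so the (q+1)-st
  coarse knot after the start is at or beyond its right end.\<close>

lemma knot_vector_supp_ancestor:
  assumes t: "knot_vector q t" and t': "sorted t'" "set t' \<subseteq> {0..1}"
    and sub: "mset t \<subseteq># mset t'"
    and j: "j + q + 1 < length t'" and ab: "t' ! j < t' ! (j + q + 1)"
  obtains j' where "j' + q + 1 < length t" "t ! j' \<le> t' ! j" "t' ! (j + q + 1) \<le> t ! (j' + q + 1)"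
proof -
  let ?a = "t' ! j" and ?b = "t' ! (j + q + 1)"
  have s: "sorted t" using t by (simp add: knot_vector_def)
  have "?a \<in> set t'" "?b \<in> set t'" using j by simp_all
  then have "0 \<le> ?a" "?a < 1" using t'(2) ab by auto
  then obtain j' where len: "j' + q + 1 < length t" and j': "t ! j' \<le> ?a"
    and above: "\<And>i. i < length t \<Longrightarrow> ?a < t ! i \<longleftrightarrow> j' < i"
    using knot_vector_last_knot_below[OF t] by blast
  have few: "length (filter (\<lambda>x. ?a < x \<and> x < ?b) t) \<le> q"
  proof -
    have "length (filter (\<lambda>x. ?a < x \<and> x < ?b) t) \<le> length (filter (\<lambda>x. ?a < x \<and> x < ?b) t')"
      using size_mset_mono[OF multiset_filter_mono[OF sub]] by (simp flip: mset_filter size_mset)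
    also have "\<dots> \<le> q" using sorted_count_between[OF t'(1), of j q] j by simp
    finally show ?thesis .
  qed
  have "?b \<le> t ! (j' + q + 1)"
  proof (rule ccontr)
    assume "\<not> ?b \<le> t ! (j' + q + 1)"
    then have "{j'<..j' + q + 1} \<subseteq> {i. i < length t \<and> ?a < t ! i \<and> t ! i < ?b}"
    proof (intro subsetI CollectI conjI)
      fix i assume i: "i \<in> {j'<..j' + q + 1}"
      then show il: "i < length t" using len by simp
      show "?a < t ! i" using above[OF il] i by simp
      have "t ! i \<le> t ! (j' + q + 1)" using sorted_nth_mono[OF s, of i "j' + q + 1"] i len by simp
      then show "t ! i < ?b" using \<open>\<not> ?b \<le> t ! (j' + q + 1)\<close> by simp
    qed
    then have "card {j'<..j' + q + 1} \<le> card {i. i < length t \<and> ?a < t ! i \<and> t ! i < ?b}"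
      by (intro card_mono) auto
    then have "q + 1 \<le> length (filter (\<lambda>x. ?a < x \<and> x < ?b) t)"
      by (simp add: length_filter_conv_card)
    then show False using few by simp
  qed
  then show ?thesis using that len j' by blast
qed

lemma knots_Suc: "knots K0 (Suc k) i = refine_knots (knots K0 k i)"
  by (simp add: knots_def)

locale open_knot_vectors =
  fixes p :: "'d::finite \<Rightarrow> nat" and K0 :: "'d \<Rightarrow> real list"
  assumes open_knots: "\<forall>i. open_knots (p i) (K0 i)"
begin

lemma knot_vector_knots: "knot_vector (p i) (knots K0 k i)"
proof (induction k)
  case 0
  then show ?case using open_knots open_knots_imp_knot_vector by (simp add: knots_def)
next
  case (Suc k)
  then show ?case by (simp add: knots_Suc knot_vector_refine_knots)
qed

lemma sorted_knots: "sorted (knots K0 k i)"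
  using knot_vector_knots by (simp add: knot_vector_def)

lemma set_knots_subset_01: "set (knots K0 k i) \<subseteq> {0..1}"
  using knot_vector_knots by (simp add: knot_vector_def)

lemma set_knots_mono: "k \<le> n \<Longrightarrow> set (knots K0 k i) \<subseteq> set (knots K0 n i)"
proof (induction n rule: dec_induct)
  case (step n)
  then show ?case using set_refine_knots_subset by (auto simp: knots_Suc)
qed simp

lemma cells_iff_knot_spans:
  "Q \<in> cells K0 k \<longleftrightarrow> (\<exists>c d. Q = cbox c d \<and> (\<forall>i. knot_span (knots K0 k i) (c $ i) (d $ i)))"
proof
  assume "Q \<in> cells K0 k"
  then obtain m where Q: "Q = cbox (\<chi> i. knots K0 k i ! m i) (\<chi> i. knots K0 k i ! Suc (m i))"
    and m: "\<forall>i. Suc (m i) < length (knots K0 k i) \<and> knots K0 k i ! m i < knots K0 k i ! Suc (m i)"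
    unfolding cells_def by blast
  then have "\<forall>i. knot_span (knots K0 k i) (knots K0 k i ! m i) (knots K0 k i ! Suc (m i))"
    using knot_span_nth[OF sorted_knots] by blast
  then show "\<exists>c d. Q = cbox c d \<and> (\<forall>i. knot_span (knots K0 k i) (c $ i) (d $ i))"
    using Q by (intro exI[of _ "\<chi> i. knots K0 k i ! m i"] exI[of _ "\<chi> i. knots K0 k i ! Suc (m i)"]) simp
next
  assume "\<exists>c d. Q = cbox c d \<and> (\<forall>i. knot_span (knots K0 k i) (c $ i) (d $ i))"
  then obtain c d where Q: "Q = cbox c d" and cd: "\<forall>i. knot_span (knots K0 k i) (c $ i) (d $ i)"
    by blast
  have "\<forall>i. \<exists>m. Suc m < length (knots K0 k i) \<and> knots K0 k i ! m = c $ i \<and> knots K0 k i ! Suc m = d $ i"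
  proof
    fix i
    obtain m where "Suc m < length (knots K0 k i)" "knots K0 k i ! m = c $ i" "knots K0 k i ! Suc m = d $ i"
      by (rule knot_span_obtain_nth[OF sorted_knots cd[rule_format, of i]])
    then show "\<exists>m. Suc m < length (knots K0 k i) \<and> knots K0 k i ! m = c $ i \<and> knots K0 k i ! Suc m = d $ i"
      by blast
  qed
  then obtain m where m: "\<forall>i. Suc (m i) < length (knots K0 k i)
      \<and> knots K0 k i ! m i = c $ i \<and> knots K0 k i ! Suc (m i) = d $ i"
    by metis
  then have "c = (\<chi> i. knots K0 k i ! m i)" "d = (\<chi> i. knots K0 k i ! Suc (m i))"
    by (auto simp: vec_eq_iff)
  moreover have "\<forall>i. knots K0 k i ! m i < knots K0 k i ! Suc (m i)"
    using m cd by (simp add: knot_span_def)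
  ultimately show "Q \<in> cells K0 k" unfolding cells_def using Q m by blast
qed

lemma interior_cell_nonempty:
  assumes "Q \<in> cells K0 k" shows "interior Q \<noteq> {}"
proof -
  obtain c d where "Q = cbox c d" "\<forall>i. knot_span (knots K0 k i) (c $ i) (d $ i)"
    using assms unfolding cells_iff_knot_spans by blast
  then show ?thesis by (simp add: interior_cbox interval_ne_empty_cart knot_span_def)
qed

lemma cell_nonempty: "Q \<in> cells K0 k \<Longrightarrow> Q \<noteq> {}"
  using interior_cell_nonempty interior_subset by blast

lemma cell_subset_unit_cube:
  assumes "Q \<in> cells K0 k" shows "Q \<subseteq> unit_cube"
proof -
  obtain c d where Q: "Q = cbox c d" and cd: "\<forall>i. knot_span (knots K0 k i) (c $ i) (d $ i)"
    using assms unfolding cells_iff_knot_spans by blast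
  have "0 \<le> c $ i \<and> d $ i \<le> 1" for i
    using cd[rule_format, of i] set_knots_subset_01[of k i] by (auto simp: knot_span_def)
  then show ?thesis unfolding Q unit_cube_def by (intro subset_interval_imp_cart(1)) auto
qed

lemma cell_subset_or_interior_disjoint:
  assumes Q: "Q \<in> cells K0 n" and ab: "\<forall>i. a $ i \<in> set (knots K0 n i) \<and> b $ i \<in> set (knots K0 n i)"
  shows "Q \<subseteq> cbox a b \<or> interior Q \<inter> cbox a b = {}"
proof -
  obtain c d where Q: "Q = cbox c d" and cd: "\<forall>i. knot_span (knots K0 n i) (c $ i) (d $ i)"
    using assms unfolding cells_iff_knot_spans by blast
  have "(a $ i \<le> c $ i \<and> d $ i \<le> b $ i) \<or> b $ i \<le> c $ i \<or> d $ i \<le> a $ i" for i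
    using knot_span_dichotomy cd ab by blast
  then consider "\<forall>i. a $ i \<le> c $ i \<and> d $ i \<le> b $ i" | i where "b $ i \<le> c $ i \<or> d $ i \<le> a $ i"
    by blast
  then show ?thesis
  proof cases
    case 1
    then show ?thesis using Q subset_interval_imp_cart(1) by blast
  next
    case 2
    have False if "x \<in> box c d" "x \<in> cbox a b" for x
    proof -
      have "c $ i < x $ i" "x $ i < d $ i" "a $ i \<le> x $ i" "x $ i \<le> b $ i"
        using that by (auto simp: mem_box_cart)
      then show False using 2 by linarith
    qed
    then have "box c d \<inter> cbox a b = {}" by blast
    then show ?thesis using Q by (simp add: interior_cbox)
  qed
qed

lemma cells_nested_or_disjoint:
  assumes "Q \<in> cells K0 n" "R \<in> cells K0 k" "k \<le> n"
  shows "Q \<subseteq> R \<or> interior Q \<inter> R = {}"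
proof -
  obtain c d where "R = cbox c d" and "\<forall>i. knot_span (knots K0 k i) (c $ i) (d $ i)"
    using assms(2) unfolding cells_iff_knot_spans by blast
  moreover have "\<forall>i. c $ i \<in> set (knots K0 n i) \<and> d $ i \<in> set (knots K0 n i)"
    using calculation(2) set_knots_mono[OF assms(3)] by (auto simp: knot_span_def)
  ultimately show ?thesis using cell_subset_or_interior_disjoint[OF assms(1)] by blast
qed

lemma bspl_knots_mem:
  assumes "j \<in> bspl p K0 l"
  shows "knots K0 l i ! j i \<in> set (knots K0 l i)" "knots K0 l i ! (j i + p i + 1) \<in> set (knots K0 l i)"
proof -
  have "j i + p i + 1 < length (knots K0 l i)" using assms by (simp add: bspl_def)
  then show "knots K0 l i ! j i \<in> set (knots K0 l i)"
    and "knots K0 l i ! (j i + p i + 1) \<in> set (knots K0 l i)" by simp_all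
qed

lemma cell_subset_or_disjoint_supp_b:
  assumes "Q \<in> cells K0 n" "j \<in> bspl p K0 l" "l \<le> n"
  shows "Q \<subseteq> supp_b p K0 l j \<or> interior Q \<inter> supp_b p K0 l j = {}"
  unfolding supp_b_def
  using cell_subset_or_interior_disjoint[OF assms(1), of "\<chi> i. knots K0 l i ! j i"
      "\<chi> i. knots K0 l i ! (j i + p i + 1)"] bspl_knots_mem[OF assms(2)] set_knots_mono[OF assms(3)]
  by auto

lemma cell_obtain_child:
  assumes "Q \<in> cells K0 k"
  obtains C where "C \<in> cells K0 (Suc k)" "C \<subseteq> Q"
proof -
  obtain c d where Q: "Q = cbox c d" and cd: "\<forall>i. knot_span (knots K0 k i) (c $ i) (d $ i)"
    using assms unfolding cells_iff_knot_spans by blast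
  have "\<forall>i. \<exists>d'. knot_span (knots K0 (Suc k) i) (c $ i) d' \<and> d' \<le> d $ i"
  proof
    fix i
    show "\<exists>d'. knot_span (knots K0 (Suc k) i) (c $ i) d' \<and> d' \<le> d $ i"
      using knot_span_shrink[OF cd[rule_format, of i] set_knots_mono[of k "Suc k" i]] by simp
  qed
  then obtain e where e: "\<forall>i. knot_span (knots K0 (Suc k) i) (c $ i) (e i) \<and> e i \<le> d $ i"
    by metis
  have "cbox c (\<chi> i. e i) \<in> cells K0 (Suc k)"
    unfolding cells_iff_knot_spans using e by (intro exI[of _ c] exI[of _ "\<chi> i. e i"]) auto
  moreover have "cbox c (\<chi> i. e i) \<subseteq> Q" unfolding Q using e by (intro subset_interval_imp_cart(1)) auto
  ultimately show ?thesis using that by blast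
qed

lemma interior_supp_b_nonempty_iff:
  "interior (supp_b p K0 l j) \<noteq> {} \<longleftrightarrow> (\<forall>i. knots K0 l i ! j i < knots K0 l i ! (j i + p i + 1))"
  unfolding supp_b_def interior_cbox interval_ne_empty_cart by simp

lemma supp_b_covered_by_cells:
  assumes j: "j \<in> bspl p K0 l" and ne: "interior (supp_b p K0 l j) \<noteq> {}" and x: "x \<in> supp_b p K0 l j"
  obtains Q where "Q \<in> cells K0 l" "x \<in> Q" "Q \<subseteq> supp_b p K0 l j"
proof -
  let ?a = "\<lambda>i. knots K0 l i ! j i" and ?b = "\<lambda>i. knots K0 l i ! (j i + p i + 1)"
  have "\<forall>i. \<exists>c d. knot_span (knots K0 l i) c d \<and> ?a i \<le> c \<and> d \<le> ?b i \<and> c \<le> x $ i \<and> x $ i \<le> d"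
  proof
    fix i
    have "?a i < ?b i" using ne by (simp add: interior_supp_b_nonempty_iff)
    moreover have "?a i \<le> x $ i" "x $ i \<le> ?b i" using x by (simp_all add: supp_b_def mem_box_cart)
    ultimately obtain c d where "knot_span (knots K0 l i) c d" "?a i \<le> c" "d \<le> ?b i" "c \<le> x $ i" "x $ i \<le> d"
      using knot_span_cover[OF bspl_knots_mem[OF j]] by blast
    then show "\<exists>c d. knot_span (knots K0 l i) c d \<and> ?a i \<le> c \<and> d \<le> ?b i \<and> c \<le> x $ i \<and> x $ i \<le> d"
      by blast
  qed
  then obtain c d where cd: "\<forall>i. knot_span (knots K0 l i) (c i) (d i)
      \<and> ?a i \<le> c i \<and> d i \<le> ?b i \<and> c i \<le> x $ i \<and> x $ i \<le> d i"
    by metis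
  let ?Q = "cbox (\<chi> i. c i) (\<chi> i. d i)"
  have "?Q \<in> cells K0 l" unfolding cells_iff_knot_spans
    using cd by (intro exI[of _ "\<chi> i. c i"] exI[of _ "\<chi> i. d i"]) auto
  moreover have "x \<in> ?Q" using cd by (simp add: mem_box_cart)
  moreover have "?Q \<subseteq> supp_b p K0 l j"
    unfolding supp_b_def using cd by (intro subset_interval_imp_cart(1)) auto
  ultimately show ?thesis using that by blast
qed

lemma supp_b_subset_unit_cube:
  assumes "j \<in> bspl p K0 l" shows "supp_b p K0 l j \<subseteq> unit_cube"
proof -
  have "0 \<le> knots K0 l i ! j i \<and> knots K0 l i ! (j i + p i + 1) \<le> 1" for i
    using bspl_knots_mem[OF assms, of i] set_knots_subset_01[of l i] by auto
  then show ?thesis unfolding supp_b_def unit_cube_def by (intro subset_interval_imp_cart(1)) auto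
qed

lemma supp_b_obtain_parent:
  assumes j: "j \<in> bspl p K0 (Suc l)" and ne: "interior (supp_b p K0 (Suc l) j) \<noteq> {}"
  obtains j' where "j' \<in> bspl p K0 l" "supp_b p K0 (Suc l) j \<subseteq> supp_b p K0 l j'"
proof -
  have "\<forall>i. \<exists>j'. j' + p i + 1 < length (knots K0 l i) \<and> knots K0 l i ! j' \<le> knots K0 (Suc l) i ! j i
      \<and> knots K0 (Suc l) i ! (j i + p i + 1) \<le> knots K0 l i ! (j' + p i + 1)"
  proof
    fix i
    have sub: "mset (knots K0 l i) \<subseteq># mset (knots K0 (Suc l) i)"
      by (simp add: knots_Suc mset_refine_knots)
    have len: "j i + p i + 1 < length (knots K0 (Suc l) i)" using j by (simp add: bspl_def)
    have lt: "knots K0 (Suc l) i ! j i < knots K0 (Suc l) i ! (j i + p i + 1)"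
      using ne by (simp add: interior_supp_b_nonempty_iff)
    show "\<exists>j'. j' + p i + 1 < length (knots K0 l i) \<and> knots K0 l i ! j' \<le> knots K0 (Suc l) i ! j i
      \<and> knots K0 (Suc l) i ! (j i + p i + 1) \<le> knots K0 l i ! (j' + p i + 1)"
      using knot_vector_supp_ancestor[OF knot_vector_knots sorted_knots set_knots_subset_01 sub len lt]
      by blast
  qed
  then obtain f where f: "\<forall>i. f i + p i + 1 < length (knots K0 l i)
      \<and> knots K0 l i ! f i \<le> knots K0 (Suc l) i ! j i
      \<and> knots K0 (Suc l) i ! (j i + p i + 1) \<le> knots K0 l i ! (f i + p i + 1)"
    by metis
  have "f \<in> bspl p K0 l" using f by (simp add: bspl_def)
  moreover have "supp_b p K0 (Suc l) j \<subseteq> supp_b p K0 l f"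
    unfolding supp_b_def using f by (intro subset_interval_imp_cart(1)) auto
  ultimately show ?thesis using that by blast
qed

lemma finite_cells: "finite (cells K0 k)"
proof -
  define B where "B = Max (range (\<lambda>i. length (knots K0 k i)))"
  have "length (knots K0 k i) \<le> B" for i unfolding B_def by (simp add: Max_ge)
  then have "{m. \<forall>i. Suc (m i) < length (knots K0 k i) \<and> knots K0 k i ! m i < knots K0 k i ! Suc (m i)}
        \<subseteq> PiE UNIV (\<lambda>_. {..<B})"
    by (auto simp: PiE_def Pi_def extensional_def) (meson Suc_lessD less_le_trans)
  then have "finite {m. \<forall>i. Suc (m i) < length (knots K0 k i) \<and> knots K0 k i ! m i < knots K0 k i ! Suc (m i)}"
    by (rule finite_subset) (intro finite_PiE; simp)
  then show ?thesis unfolding cells_def by (simp add: setcompr_eq_image)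
qed

end

context open_knot_vectors
begin

lemma hier_mesh_domain_0: "hier_mesh K0 \<Omega> \<Longrightarrow> \<Omega> 0 = unit_cube"
  by (simp add: hier_mesh_def)

lemma hier_mesh_antimono: "hier_mesh K0 \<Omega> \<Longrightarrow> m \<le> n \<Longrightarrow> \<Omega> n \<subseteq> \<Omega> m"
  unfolding hier_mesh_def by (metis lift_Suc_antimono_le)

lemma hbasis_level_le_mesh_level:
  assumes "hier_mesh K0 \<Omega>" "(l, j) \<in> hbasis p K0 \<Omega>" "(n, T) \<in> mesh K0 \<Omega>" "T \<subseteq> supp_b p K0 l j"
  shows "l \<le> n"
proof (rule ccontr)
  assume "\<not> l \<le> n"
  then have "supp_b p K0 l j \<subseteq> \<Omega> (Suc n)"
    using hier_mesh_antimono[OF assms(1), of "Suc n" l] assms(2) by (auto simp: hbasis_def)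
  then show False using assms(3,4) by (auto simp: mesh_def)
qed

lemma cell_subset_or_disjoint_domain:
  assumes \<Omega>: "hier_mesh K0 \<Omega>" and Q: "Q \<in> cells K0 n" and m: "m \<le> Suc n"
  shows "Q \<subseteq> \<Omega> m \<or> interior Q \<inter> \<Omega> m = {}"
proof (cases m)
  case 0
  then show ?thesis using hier_mesh_domain_0[OF \<Omega>] cell_subset_unit_cube[OF Q] by simp
next
  case (Suc l)
  obtain S where S: "S \<subseteq> cells K0 l" "\<Omega> (Suc l) = \<Union>S" using \<Omega> unfolding hier_mesh_def by blast
  have "Q \<subseteq> R" if "R \<in> S" "x \<in> interior Q" "x \<in> R" for R x
    using cells_nested_or_disjoint[OF Q, of R l] S that m Suc by auto
  then show ?thesis using S Suc by blast
qed

lemma mesh_element_subset_hbasis_supp: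
  assumes \<Omega>: "hier_mesh K0 \<Omega>" and R: "(a, R) \<in> mesh K0 \<Omega>"
    and T: "T \<in> cells K0 n" "T \<subseteq> R"
    and g: "(m, g) \<in> hbasis p K0 \<Omega>" and Tg: "T \<subseteq> supp_b p K0 m g"
  shows "R \<subseteq> supp_b p K0 m g"
proof -
  have Ra: "R \<in> cells K0 a" "\<not> R \<subseteq> \<Omega> (Suc a)" using R by (auto simp: mesh_def)
  have gm: "g \<in> bspl p K0 m" "supp_b p K0 m g \<subseteq> \<Omega> m" using g by (auto simp: hbasis_def)
  have int: "interior T \<noteq> {}" "interior T \<subseteq> interior R" "interior T \<subseteq> supp_b p K0 m g"
    using interior_cell_nonempty[OF T(1)] interior_mono[OF T(2)] Tg interior_subset by blast+
  have "m \<le> a"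
  proof (rule ccontr)
    assume "\<not> m \<le> a"
    then have "interior T \<subseteq> \<Omega> (Suc a)" using hier_mesh_antimono[OF \<Omega>, of "Suc a" m] int gm by auto
    moreover have "interior R \<inter> \<Omega> (Suc a) = {}"
      using cell_subset_or_disjoint_domain[OF \<Omega> Ra(1), of "Suc a"] Ra(2) by simp
    ultimately show False using int by blast
  qed
  then show ?thesis using cell_subset_or_disjoint_supp_b[OF Ra(1) gm(1)] int by blast
qed

lemma supp_b_subset_hbasis_supp:
  assumes \<Omega>: "hier_mesh K0 \<Omega>"
  shows "g \<in> bspl p K0 m \<Longrightarrow> interior (supp_b p K0 m g) \<noteq> {} \<Longrightarrow> \<not> supp_b p K0 m g \<subseteq> \<Omega> (Suc m)
     \<Longrightarrow> \<exists>m' g'. (m', g') \<in> hbasis p K0 \<Omega> \<and> supp_b p K0 m g \<subseteq> supp_b p K0 m' g'"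
proof (induction m arbitrary: g)
  case 0
  then have "(0, g) \<in> hbasis p K0 \<Omega>"
    using hier_mesh_domain_0[OF \<Omega>] supp_b_subset_unit_cube by (simp add: hbasis_def)
  then show ?case by blast
next
  case (Suc l)
  show ?case
  proof (cases "supp_b p K0 (Suc l) g \<subseteq> \<Omega> (Suc l)")
    case True
    then have "(Suc l, g) \<in> hbasis p K0 \<Omega>" using Suc.prems by (simp add: hbasis_def)
    then show ?thesis by blast
  next
    case False
    obtain g' where g': "g' \<in> bspl p K0 l" "supp_b p K0 (Suc l) g \<subseteq> supp_b p K0 l g'"
      using supp_b_obtain_parent Suc.prems by blast
    have "interior (supp_b p K0 l g') \<noteq> {}" using Suc.prems(2) interior_mono[OF g'(2)] by blast
    moreover have "\<not> supp_b p K0 l g' \<subseteq> \<Omega> (Suc l)" using False g'(2) by blast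
    ultimately show ?thesis using Suc.IH[OF g'(1)] g'(2) by blast
  qed
qed

lemma admissible_neighbor_levels:
  assumes "admissible p K0 \<Omega>" "(a, R) \<in> mesh K0 \<Omega>" "(b, S) \<in> mesh K0 \<Omega>"
    "(m, g) \<in> hbasis p K0 \<Omega>" "R \<subseteq> supp_b p K0 m g" "S \<subseteq> supp_b p K0 m g"
  shows "a \<le> b + 1" "b \<le> a + 1"
proof -
  have "(b, S) \<in> neighbors p K0 \<Omega> (a, R)" using assms unfolding neighbors_def by auto
  then show "a \<le> b + 1" "b \<le> a + 1" using assms(1,2) unfolding admissible_def by fastforce+
qed

end

lemma marked_iter_subset_mesh: "M \<subseteq> mesh K0 \<Omega> \<Longrightarrow> marked_iter p K0 \<Omega> M i \<subseteq> mesh K0 \<Omega>"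
  by (induction i) (auto simp: bad_neighbors_def neighbors_def)

lemma marked_closure_subset_mesh: "M \<subseteq> mesh K0 \<Omega> \<Longrightarrow> marked_closure p K0 \<Omega> M \<subseteq> mesh K0 \<Omega>"
  unfolding marked_closure_def using marked_iter_subset_mesh by blast

lemma subset_marked_closure: "M \<subseteq> marked_closure p K0 \<Omega> M"
  unfolding marked_closure_def using marked_iter.simps(1) by blast

lemma bad_neighbor_in_marked_closure:
  assumes "x \<in> marked_closure p K0 \<Omega> M" "y \<in> bad_neighbors p K0 \<Omega> x"
  shows "y \<in> marked_closure p K0 \<Omega> M"
proof -
  obtain i where "x \<in> marked_iter p K0 \<Omega> M i" using assms(1) by (auto simp: marked_closure_def)
  then have "y \<in> marked_iter p K0 \<Omega> M (Suc i)" using assms(2) by auto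
  then show ?thesis unfolding marked_closure_def by blast
qed

lemma refine_step_0 [simp]: "refine_step p K0 \<Omega> M 0 = \<Omega> 0"
  by (simp add: refine_step_def)

lemma refine_step_Suc [simp]:
  "refine_step p K0 \<Omega> M (Suc l) = \<Omega> (Suc l) \<union> \<Union> {T. (l, T) \<in> marked_closure p K0 \<Omega> M}"
  by (simp add: refine_step_def)

lemma refine_step_mono: "\<Omega> k \<subseteq> refine_step p K0 \<Omega> M k"
  by (cases k) auto

context open_knot_vectors
begin

lemma hier_mesh_refine_step:
  assumes \<Omega>: "hier_mesh K0 \<Omega>" and M: "M \<subseteq> mesh K0 \<Omega>"
  shows "hier_mesh K0 (refine_step p K0 \<Omega> M)"
proof -
  let ?MC = "marked_closure p K0 \<Omega> M" and ?\<Omega> = "refine_step p K0 \<Omega> M"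
  have marked: "T \<in> cells K0 l \<and> T \<subseteq> \<Omega> l" if "(l, T) \<in> ?MC" for l T
    using marked_closure_subset_mesh[OF M] that by (auto simp: mesh_def)
  have "?\<Omega> (Suc k) \<subseteq> ?\<Omega> k" for k
  proof -
    have "\<Omega> (Suc k) \<subseteq> \<Omega> k" using hier_mesh_antimono[OF \<Omega>] by simp
    then show ?thesis using marked[of k] refine_step_mono[of \<Omega> k p K0 M] by auto
  qed
  moreover have "\<exists>S \<subseteq> cells K0 k. ?\<Omega> (Suc k) = \<Union>S" for k
  proof -
    obtain S where S: "S \<subseteq> cells K0 k" "\<Omega> (Suc k) = \<Union>S" using \<Omega> unfolding hier_mesh_def by blast
    then have "S \<union> {T. (k, T) \<in> ?MC} \<subseteq> cells K0 k" using marked by blast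
    moreover have "?\<Omega> (Suc k) = \<Union>(S \<union> {T. (k, T) \<in> ?MC})" using S by auto
    ultimately show ?thesis by blast
  qed
  moreover have "\<exists>N. \<forall>k\<ge>N. ?\<Omega> k = {}"
  proof -
    obtain N where N: "\<forall>k\<ge>N. \<Omega> k = {}" using \<Omega> unfolding hier_mesh_def by blast
    have "?\<Omega> (Suc l) = {}" if "N \<le> l" for l
      using N that marked[of l] cell_nonempty by fastforce
    then have "\<forall>k\<ge>Suc N. ?\<Omega> k = {}" by (metis Suc_le_D Suc_le_mono)
    then show ?thesis by blast
  qed
  ultimately show ?thesis using \<Omega> unfolding hier_mesh_def by simp
qed

lemma refine_step_mesh_parent:
  assumes \<Omega>: "hier_mesh K0 \<Omega>" and M: "M \<subseteq> mesh K0 \<Omega>"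
    and T: "(n, T) \<in> mesh K0 (refine_step p K0 \<Omega> M)"
  obtains a R where "(a, R) \<in> mesh K0 \<Omega>" "T \<subseteq> R"
    "n = a \<and> (a, R) \<notin> marked_closure p K0 \<Omega> M \<or> n = Suc a \<and> (a, R) \<in> marked_closure p K0 \<Omega> M"
proof -
  let ?MC = "marked_closure p K0 \<Omega> M" and ?\<Omega> = "refine_step p K0 \<Omega> M"
  have Tn: "T \<in> cells K0 n" "T \<subseteq> ?\<Omega> n" "\<not> T \<subseteq> ?\<Omega> (Suc n)" using T by (auto simp: mesh_def)
  show ?thesis
  proof (cases "T \<subseteq> \<Omega> n")
    case True
    have "(n, T) \<in> mesh K0 \<Omega>" using True Tn refine_step_mono[of \<Omega> "Suc n" p K0 M] by (auto simp: mesh_def)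
    moreover have "(n, T) \<notin> ?MC" using Tn(3) by auto
    ultimately show ?thesis using that by blast
  next
    case False
    then obtain a where a: "n = Suc a" using Tn(2) by (cases n) auto
    obtain x where x: "x \<in> interior T" using interior_cell_nonempty[OF Tn(1)] by blast
    have "interior T \<inter> \<Omega> n = {}" using cell_subset_or_disjoint_domain[OF \<Omega> Tn(1), of n] False by simp
    then obtain R where R: "(a, R) \<in> ?MC" "x \<in> R" using x Tn(2) interior_subset a by fastforce
    have Ra: "(a, R) \<in> mesh K0 \<Omega>" using R marked_closure_subset_mesh[OF M] by blast
    then have "T \<subseteq> R" using cells_nested_or_disjoint[OF Tn(1), of R a] x R a by (auto simp: mesh_def)
    then show ?thesis using that Ra R a by blast
  qed
qed

text \<open>A basis function created by the refinement has its support inside an element marked at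
  the level below; comparing that element with any coarse element meeting the support through a
  common basis function of the old mesh bounds the level of the latter.\<close>

lemma refine_step_new_hbasis_level:
  assumes adm: "admissible p K0 \<Omega>" and M: "M \<subseteq> mesh K0 \<Omega>"
    and lj: "(l, j) \<in> hbasis p K0 (refine_step p K0 \<Omega> M)" and new: "\<not> supp_b p K0 l j \<subseteq> \<Omega> l"
    and R: "(a, R) \<in> mesh K0 \<Omega>" and T: "T \<in> cells K0 n" "T \<subseteq> R" "T \<subseteq> supp_b p K0 l j"
  shows "a \<le> l"
proof -
  let ?S = "supp_b p K0 l j"
  have \<Omega>: "hier_mesh K0 \<Omega>" using adm by (simp add: admissible_def)
  have j: "j \<in> bspl p K0 l" "?S \<subseteq> refine_step p K0 \<Omega> M l" using lj by (auto simp: hbasis_def)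
  obtain l0 where l0: "l = Suc l0"
    using new hier_mesh_domain_0[OF \<Omega>] supp_b_subset_unit_cube[OF j(1)] by (cases l) auto
  have int: "interior ?S \<noteq> {}" using interior_cell_nonempty[OF T(1)] interior_mono[OF T(3)] by blast
  obtain x where x: "x \<in> ?S" "x \<notin> \<Omega> l" using new by blast
  obtain Q where Q: "Q \<in> cells K0 l" "x \<in> Q" "Q \<subseteq> ?S" by (rule supp_b_covered_by_cells[OF j(1) int x(1)])
  obtain y where y: "y \<in> interior Q" using interior_cell_nonempty[OF Q(1)] by blast
  have "interior Q \<inter> \<Omega> l = {}" using cell_subset_or_disjoint_domain[OF \<Omega> Q(1), of l] Q(2) x(2) by auto
  then have "y \<notin> \<Omega> l" using y by blast
  moreover have "y \<in> refine_step p K0 \<Omega> M l" using y Q(3) j(2) interior_subset by blast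
  ultimately obtain P where P: "(l0, P) \<in> marked_closure p K0 \<Omega> M" "y \<in> P" using l0 by auto
  have Pm: "(l0, P) \<in> mesh K0 \<Omega>" using P marked_closure_subset_mesh[OF M] by blast
  then have "Q \<subseteq> P" using cells_nested_or_disjoint[OF Q(1), of P l0] y P l0 by (auto simp: mesh_def)
  obtain j' where j': "j' \<in> bspl p K0 l0" "?S \<subseteq> supp_b p K0 l0 j'"
    using supp_b_obtain_parent[of j l0] j(1) int l0 by blast
  have "interior (supp_b p K0 l0 j') \<noteq> {}" using int interior_mono[OF j'(2)] by blast
  moreover have "\<not> supp_b p K0 l0 j' \<subseteq> \<Omega> (Suc l0)" using new j'(2) l0 by blast
  ultimately obtain m g where mg: "(m, g) \<in> hbasis p K0 \<Omega>" "supp_b p K0 l0 j' \<subseteq> supp_b p K0 m g"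
    using supp_b_subset_hbasis_supp[OF \<Omega> j'(1)] by blast
  have "P \<subseteq> supp_b p K0 m g"
    using mesh_element_subset_hbasis_supp[OF \<Omega> Pm Q(1) \<open>Q \<subseteq> P\<close> mg(1)] Q(3) j'(2) mg(2) by blast
  moreover have "R \<subseteq> supp_b p K0 m g"
    using mesh_element_subset_hbasis_supp[OF \<Omega> R T(1,2) mg(1)] T(3) j'(2) mg(2) by blast
  ultimately show "a \<le> l" using admissible_neighbor_levels(1)[OF adm R Pm mg(1)] l0 by simp
qed

text \<open>The closure of the marked set under bad neighbours is exactly what keeps the refined mesh
  admissible: a marked element never shares a basis function of the old mesh with an unmarked
  element one level coarser.\<close>

lemma refine_step_level_bound:
  assumes adm: "admissible p K0 \<Omega>" and M: "M \<subseteq> mesh K0 \<Omega>"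
    and T1: "(n1, T1) \<in> mesh K0 (refine_step p K0 \<Omega> M)"
    and T2: "(n2, T2) \<in> mesh K0 (refine_step p K0 \<Omega> M)"
    and lj: "(l, j) \<in> hbasis p K0 (refine_step p K0 \<Omega> M)"
    and T1S: "T1 \<subseteq> supp_b p K0 l j" and T2S: "T2 \<subseteq> supp_b p K0 l j"
  shows "n1 \<le> n2 + 1"
proof -
  let ?MC = "marked_closure p K0 \<Omega> M" and ?\<Omega> = "refine_step p K0 \<Omega> M" and ?S = "supp_b p K0 l j"
  have \<Omega>: "hier_mesh K0 \<Omega>" using adm by (simp add: admissible_def)
  have cells: "T1 \<in> cells K0 n1" "T2 \<in> cells K0 n2" using T1 T2 by (auto simp: mesh_def)
  have j: "j \<in> bspl p K0 l" "\<not> ?S \<subseteq> ?\<Omega> (Suc l)" using lj by (auto simp: hbasis_def)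
  obtain a1 R1 where R1: "(a1, R1) \<in> mesh K0 \<Omega>" "T1 \<subseteq> R1"
    "n1 = a1 \<and> (a1, R1) \<notin> ?MC \<or> n1 = Suc a1 \<and> (a1, R1) \<in> ?MC"
    by (rule refine_step_mesh_parent[OF \<Omega> M T1])
  obtain a2 R2 where R2: "(a2, R2) \<in> mesh K0 \<Omega>" "T2 \<subseteq> R2"
    "n2 = a2 \<and> (a2, R2) \<notin> ?MC \<or> n2 = Suc a2 \<and> (a2, R2) \<in> ?MC"
    by (rule refine_step_mesh_parent[OF \<Omega> M T2])
  show ?thesis
  proof (cases "?S \<subseteq> \<Omega> l")
    case True
    then have ljO: "(l, j) \<in> hbasis p K0 \<Omega>"
      using j refine_step_mono[of \<Omega> "Suc l" p K0 M] by (auto simp: hbasis_def)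
    have R1S: "R1 \<subseteq> ?S" by (rule mesh_element_subset_hbasis_supp[OF \<Omega> R1(1) cells(1) R1(2) ljO T1S])
    have R2S: "R2 \<subseteq> ?S" by (rule mesh_element_subset_hbasis_supp[OF \<Omega> R2(1) cells(2) R2(2) ljO T2S])
    have "(a2, R2) \<in> bad_neighbors p K0 \<Omega> (a1, R1)" if "a1 = a2 + 1"
      using that R2(1) ljO R1S R2S by (auto simp: bad_neighbors_def neighbors_def)
    then have "(a1, R1) \<in> ?MC \<Longrightarrow> a1 = a2 + 1 \<Longrightarrow> (a2, R2) \<in> ?MC"
      using bad_neighbor_in_marked_closure by blast
    then show ?thesis
      using admissible_neighbor_levels(1)[OF adm R1(1) R2(1) ljO R1S R2S] R1(3) R2(3)
      by (cases "a1 = a2 + 1") auto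
  next
    case False
    have "l \<le> n2" by (rule hbasis_level_le_mesh_level[OF hier_mesh_refine_step[OF \<Omega> M] lj T2 T2S])
    moreover have "a1 \<le> l"
      by (rule refine_step_new_hbasis_level[OF adm M lj False R1(1) cells(1) R1(2) T1S])
    ultimately show ?thesis using R1(3) by auto
  qed
qed

lemma admissible_refine_step:
  assumes adm: "admissible p K0 \<Omega>" and M: "M \<subseteq> mesh K0 \<Omega>"
  shows "admissible p K0 (refine_step p K0 \<Omega> M)"
proof -
  let ?\<Omega> = "refine_step p K0 \<Omega> M"
  have "n1 \<le> n2 + 1 \<and> n2 \<le> n1 + 1"
    if T1: "(n1, T1) \<in> mesh K0 ?\<Omega>" and T2: "(n2, T2) \<in> neighbors p K0 ?\<Omega> (n1, T1)" for n1 T1 n2 T2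
  proof -
    obtain l j where lj: "(l, j) \<in> hbasis p K0 ?\<Omega>" "T1 \<subseteq> supp_b p K0 l j" "T2 \<subseteq> supp_b p K0 l j"
      and T2m: "(n2, T2) \<in> mesh K0 ?\<Omega>"
      using T2 unfolding neighbors_def by auto
    show ?thesis
      using refine_step_level_bound[OF adm M T1 T2m lj] refine_step_level_bound[OF adm M T2m T1 lj(1,3,2)]
      by simp
  qed
  moreover have "hier_mesh K0 ?\<Omega>" using hier_mesh_refine_step M adm by (simp add: admissible_def)
  ultimately show ?thesis unfolding admissible_def by fastforce
qed

end

definition refined_elements :: "('d::finite \<Rightarrow> real list) \<Rightarrow> (nat \<Rightarrow> (real^'d) set)
    \<Rightarrow> (nat \<Rightarrow> (real^'d) set) \<Rightarrow> (nat \<times> (real^'d) set) set" where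
  "refined_elements K0 \<Omega> \<Omega>' = {(k, T) \<in> mesh K0 \<Omega>. T \<subseteq> \<Omega>' (Suc k)}"

definition pending_cells :: "('d::finite \<Rightarrow> real list) \<Rightarrow> (nat \<Rightarrow> (real^'d) set)
    \<Rightarrow> (nat \<Rightarrow> (real^'d) set) \<Rightarrow> (nat \<times> (real^'d) set) set" where
  "pending_cells K0 \<Omega> \<Omega>' = {(k, Q). Q \<in> cells K0 k \<and> Q \<subseteq> \<Omega>' (Suc k) \<and> \<not> Q \<subseteq> \<Omega> (Suc k)}"

context open_knot_vectors
begin

lemma cell_obtain_mesh_element:
  assumes \<Omega>: "hier_mesh K0 \<Omega>"
  shows "C \<in> cells K0 m \<Longrightarrow> C \<subseteq> \<Omega> m \<Longrightarrow> \<exists>n E. m \<le> n \<and> E \<subseteq> C \<and> (n, E) \<in> mesh K0 \<Omega>"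
proof -
  obtain N where N: "\<forall>k\<ge>N. \<Omega> k = {}" using \<Omega> unfolding hier_mesh_def by blast
  show "C \<in> cells K0 m \<Longrightarrow> C \<subseteq> \<Omega> m \<Longrightarrow> \<exists>n E. m \<le> n \<and> E \<subseteq> C \<and> (n, E) \<in> mesh K0 \<Omega>"
  proof (induction "N - m" arbitrary: m C rule: less_induct)
    case less
    show ?case
    proof (cases "C \<subseteq> \<Omega> (Suc m)")
      case False
      then have "(m, C) \<in> mesh K0 \<Omega>" using less.prems by (simp add: mesh_def)
      then show ?thesis by blast
    next
      case True
      have "m < N" using less.prems N cell_nonempty by (metis not_less subset_empty)
      obtain C' where C': "C' \<in> cells K0 (Suc m)" "C' \<subseteq> C" by (rule cell_obtain_child[OF less.prems(1)])
      have "N - Suc m < N - m" using \<open>m < N\<close> by simp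
      then obtain n E where "Suc m \<le> n" "E \<subseteq> C'" "(n, E) \<in> mesh K0 \<Omega>"
        using less.hyps[of "Suc m" C'] C' True by blast
      then show ?thesis using C'(2) by (intro exI[of _ n] exI[of _ E]) auto
    qed
  qed
qed

text \<open>If the finer admissible mesh refines an element, it refines its bad neighbours too:
  otherwise a basis function of the finer mesh would see both that coarse neighbour and an element
  two levels finer inside the refined one.\<close>

lemma bad_neighbor_refined:
  assumes adm: "admissible p K0 \<Omega>" and adm': "admissible p K0 \<Omega>'" and le: "\<forall>k. \<Omega> k \<subseteq> \<Omega>' k"
    and T: "(k, T) \<in> refined_elements K0 \<Omega> \<Omega>'" and T': "(k', T') \<in> bad_neighbors p K0 \<Omega> (k, T)"
  shows "(k', T') \<in> refined_elements K0 \<Omega> \<Omega>'"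
proof -
  have \<Omega>: "hier_mesh K0 \<Omega>" and \<Omega>': "hier_mesh K0 \<Omega>'" using adm adm' by (simp_all add: admissible_def)
  obtain l g where g: "(l, g) \<in> hbasis p K0 \<Omega>" "T \<subseteq> supp_b p K0 l g" "T' \<subseteq> supp_b p K0 l g"
    and T'm: "(k', T') \<in> mesh K0 \<Omega>" and k: "k = Suc k'"
    using T' unfolding bad_neighbors_def neighbors_def by auto
  let ?G = "supp_b p K0 l g"
  have Tm: "(k, T) \<in> mesh K0 \<Omega>" "T \<subseteq> \<Omega>' (Suc k)" using T by (auto simp: refined_elements_def)
  have gl: "g \<in> bspl p K0 l" "?G \<subseteq> \<Omega> l" "\<not> ?G \<subseteq> \<Omega> (Suc l)" using g(1) by (auto simp: hbasis_def)
  have Tk: "T \<in> cells K0 k" using Tm by (simp add: mesh_def)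
  have "l \<le> k'" by (rule hbasis_level_le_mesh_level[OF \<Omega> g(1) T'm g(3)])
  moreover have "\<not> l < k'"
  proof
    assume "l < k'"
    have int: "interior ?G \<noteq> {}" using interior_cell_nonempty[OF Tk] interior_mono[OF g(2)] by blast
    obtain x where x: "x \<in> ?G" "x \<notin> \<Omega> (Suc l)" using gl(3) by blast
    obtain Q where Q: "Q \<in> cells K0 l" "x \<in> Q" "Q \<subseteq> ?G" by (rule supp_b_covered_by_cells[OF gl(1) int x(1)])
    have "(l, Q) \<in> mesh K0 \<Omega>" using Q x gl(2) by (auto simp: mesh_def)
    then have "k \<le> l + 1" using admissible_neighbor_levels(1)[OF adm Tm(1) _ g(1) g(2) Q(3)] by simp
    then show False using \<open>l < k'\<close> k by simp
  qed
  ultimately have l: "l = k'" by simp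
  show ?thesis
  proof (rule ccontr)
    assume "(k', T') \<notin> refined_elements K0 \<Omega> \<Omega>'"
    then have T'O': "(k', T') \<in> mesh K0 \<Omega>'" using T'm le by (auto simp: refined_elements_def mesh_def)
    then have gO': "(k', g) \<in> hbasis p K0 \<Omega>'" using gl l le g(3) by (auto simp: hbasis_def mesh_def)
    obtain C where C: "C \<in> cells K0 (Suc k)" "C \<subseteq> T" by (rule cell_obtain_child[OF Tk])
    obtain n E where E: "Suc k \<le> n" "E \<subseteq> C" "(n, E) \<in> mesh K0 \<Omega>'"
      using cell_obtain_mesh_element[OF \<Omega>' C(1)] C(2) Tm(2) by blast
    have "E \<subseteq> supp_b p K0 k' g" using E(2) C(2) g(2) l by blast
    then have "n \<le> k' + 1" using admissible_neighbor_levels(2)[OF adm' T'O' E(3) gO'] g(3) l by simp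
    then show False using E(1) k by simp
  qed
qed

lemma marked_closure_refined_elements:
  assumes "admissible p K0 \<Omega>" "admissible p K0 \<Omega>'" "\<forall>k. \<Omega> k \<subseteq> \<Omega>' k"
  shows "marked_closure p K0 \<Omega> (refined_elements K0 \<Omega> \<Omega>') = refined_elements K0 \<Omega> \<Omega>'"
proof -
  let ?M = "refined_elements K0 \<Omega> \<Omega>'"
  have "marked_iter p K0 \<Omega> ?M i \<subseteq> ?M" for i
  proof (induction i)
    case (Suc i)
    have bad: "y \<in> ?M" if "x \<in> marked_iter p K0 \<Omega> ?M i" "y \<in> bad_neighbors p K0 \<Omega> x" for x y
      using that Suc.IH bad_neighbor_refined[OF assms, of "fst x" "snd x" "fst y" "snd y"]
      by (metis prod.collapse subsetD)
    have "\<Union> (bad_neighbors p K0 \<Omega> ` marked_iter p K0 \<Omega> ?M i) \<subseteq> ?M"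
      by (intro UN_least subsetI) (rule bad)
    then show ?case unfolding marked_iter.simps by (rule Un_least[OF Suc.IH])
  qed simp
  then have "marked_closure p K0 \<Omega> ?M \<subseteq> ?M" unfolding marked_closure_def by (rule UN_least)
  then show ?thesis using subset_marked_closure[of ?M p K0 \<Omega>] by (rule antisym)
qed

lemma finite_pending_cells:
  assumes "hier_mesh K0 \<Omega>'" shows "finite (pending_cells K0 \<Omega> \<Omega>')"
proof -
  obtain N where N: "\<forall>k\<ge>N. \<Omega>' k = {}" using assms unfolding hier_mesh_def by blast
  have "pending_cells K0 \<Omega> \<Omega>' \<subseteq> Sigma {..<N} (cells K0)"
  proof safe
    fix k Q assume "(k, Q) \<in> pending_cells K0 \<Omega> \<Omega>'"
    then have Q: "Q \<in> cells K0 k" "Q \<subseteq> \<Omega>' (Suc k)" by (auto simp: pending_cells_def)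
    then have "\<Omega>' (Suc k) \<noteq> {}" using cell_nonempty by blast
    then show "k < N" using N not_less_eq_eq by auto
    show "Q \<in> cells K0 k" by (fact Q(1))
  qed
  moreover have "finite (Sigma {..<N} (cells K0))" using finite_cells by auto
  ultimately show ?thesis by (rule finite_subset)
qed

lemma domain_subset_if_no_pending_cells:
  assumes "hier_mesh K0 \<Omega>'" "\<And>Q. (k, Q) \<notin> pending_cells K0 \<Omega> \<Omega>'"
  shows "\<Omega>' (Suc k) \<subseteq> \<Omega> (Suc k)"
proof -
  obtain S where "S \<subseteq> cells K0 k" "\<Omega>' (Suc k) = \<Union>S" using assms(1) unfolding hier_mesh_def by blast
  then show ?thesis using assms(2) unfolding pending_cells_def by blast
qed

lemma eq_if_no_pending_cells:
  assumes "hier_mesh K0 \<Omega>" "hier_mesh K0 \<Omega>'" "\<forall>k. \<Omega> k \<subseteq> \<Omega>' k" "pending_cells K0 \<Omega> \<Omega>' = {}"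
  shows "\<Omega> = \<Omega>'"
proof
  fix k show "\<Omega> k = \<Omega>' k"
  proof (cases k)
    case 0
    then show ?thesis using hier_mesh_domain_0[OF assms(1)] hier_mesh_domain_0[OF assms(2)] by simp
  next
    case (Suc l)
    then show ?thesis using domain_subset_if_no_pending_cells[OF assms(2), of l] assms(3,4) by blast
  qed
qed

text \<open>A pending cell of least level is an element of the current mesh, so refining all refined
  elements settles it.\<close>

lemma pending_cells_refine_step:
  assumes adm: "admissible p K0 \<Omega>" and adm': "admissible p K0 \<Omega>'" and le: "\<forall>k. \<Omega> k \<subseteq> \<Omega>' k"
    and ne: "pending_cells K0 \<Omega> \<Omega>' \<noteq> {}"
  shows "pending_cells K0 (refine_step p K0 \<Omega> (refined_elements K0 \<Omega> \<Omega>')) \<Omega>' \<subset> pending_cells K0 \<Omega> \<Omega>'"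
proof -
  let ?P = "pending_cells K0 \<Omega> \<Omega>'" and ?M = "refined_elements K0 \<Omega> \<Omega>'"
  let ?\<Omega> = "refine_step p K0 \<Omega> ?M"
  have \<Omega>: "hier_mesh K0 \<Omega>" and \<Omega>': "hier_mesh K0 \<Omega>'" using adm adm' by (simp_all add: admissible_def)
  define k where "k = (LEAST k. \<exists>Q. (k, Q) \<in> ?P)"
  have "\<exists>k Q. (k, Q) \<in> ?P" using ne by auto
  then obtain Q where Q: "(k, Q) \<in> ?P" unfolding k_def by (rule LeastI_ex[THEN exE])
  have Qk: "Q \<in> cells K0 k" "Q \<subseteq> \<Omega>' (Suc k)" "\<not> Q \<subseteq> \<Omega> (Suc k)"
    using Q by (auto simp: pending_cells_def)
  have "Q \<subseteq> \<Omega> k"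
  proof (cases k)
    case 0
    then have "\<Omega> k = unit_cube" using hier_mesh_domain_0[OF \<Omega>] by (simp only:)
    then show ?thesis using cell_subset_unit_cube[OF Qk(1)] by (simp only:)
  next
    case (Suc l)
    then have "\<And>Q'. (l, Q') \<notin> ?P"
      using not_less_Least[of l "\<lambda>k. \<exists>Q. (k, Q) \<in> ?P"] unfolding k_def by auto
    then have "\<Omega>' (Suc l) \<subseteq> \<Omega> (Suc l)" by (rule domain_subset_if_no_pending_cells[OF \<Omega>'])
    then show ?thesis using Qk(2) hier_mesh_antimono[OF \<Omega>', of k "Suc k"] Suc by auto
  qed
  then have "(k, Q) \<in> ?M" using Qk by (simp add: refined_elements_def mesh_def)
  then have "Q \<subseteq> ?\<Omega> (Suc k)"
    unfolding refine_step_Suc marked_closure_refined_elements[OF adm adm' le] by blast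
  then have "(k, Q) \<notin> pending_cells K0 ?\<Omega> \<Omega>'" by (simp add: pending_cells_def)
  moreover have "pending_cells K0 ?\<Omega> \<Omega>' \<subseteq> ?P"
  proof (rule subrelI)
    fix k' Q' assume "(k', Q') \<in> pending_cells K0 ?\<Omega> \<Omega>'"
    then show "(k', Q') \<in> ?P"
      using refine_step_mono[of \<Omega> "Suc k'" p K0 ?M] by (auto simp: pending_cells_def)
  qed
  ultimately show ?thesis using Q by blast
qed

lemma refine_step_refined_elements:
  assumes adm: "admissible p K0 \<Omega>" and adm': "admissible p K0 \<Omega>'" and le: "\<forall>k. \<Omega> k \<subseteq> \<Omega>' k"
  shows "refine_step p K0 \<Omega> (refined_elements K0 \<Omega> \<Omega>') k \<subseteq> \<Omega>' k"
  using le marked_closure_refined_elements[OF assms]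
  by (cases k) (auto simp: refined_elements_def)

lemma admissible_finer_mesh_reachable:
  assumes adm': "admissible p K0 \<Omega>'"
  shows "admissible p K0 \<Omega> \<Longrightarrow> \<forall>k. \<Omega> k \<subseteq> \<Omega>' k \<Longrightarrow> (refine_rel p K0)\<^sup>*\<^sup>* \<Omega> \<Omega>'"
proof (induction "card (pending_cells K0 \<Omega> \<Omega>')" arbitrary: \<Omega> rule: less_induct)
  case less
  have \<Omega>: "hier_mesh K0 \<Omega>" and \<Omega>': "hier_mesh K0 \<Omega>'" using less.prems adm' by (simp_all add: admissible_def)
  show ?case
  proof (cases "pending_cells K0 \<Omega> \<Omega>' = {}")
    case True
    then show ?thesis using eq_if_no_pending_cells[OF \<Omega> \<Omega>' less.prems(2)] by simp
  next
    case False
    let ?M = "refined_elements K0 \<Omega> \<Omega>'"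
    let ?\<Omega> = "refine_step p K0 \<Omega> ?M"
    have "refine_rel p K0 \<Omega> ?\<Omega>"
      unfolding refine_rel_def by (intro exI[of _ ?M]) (auto simp: refined_elements_def)
    moreover have "(refine_rel p K0)\<^sup>*\<^sup>* ?\<Omega> \<Omega>'"
    proof (rule less.hyps)
      show "card (pending_cells K0 ?\<Omega> \<Omega>') < card (pending_cells K0 \<Omega> \<Omega>')"
        using pending_cells_refine_step[OF less.prems(1) adm' less.prems(2) False]
        by (intro psubset_card_mono finite_pending_cells[OF \<Omega>'])
      show "admissible p K0 ?\<Omega>"
        by (rule admissible_refine_step[OF less.prems(1)]) (auto simp: refined_elements_def)
      show "\<forall>k. ?\<Omega> k \<subseteq> \<Omega>' k" using refine_step_refined_elements[OF less.prems(1) adm' less.prems(2)] by blast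
    qed
    ultimately show ?thesis by (rule converse_rtranclp_into_rtranclp)
  qed
qed

end

context open_knot_vectors
begin

lemma refinements_admissible_finer:
  assumes "(refine_rel p K0)\<^sup>*\<^sup>* \<Omega> \<Omega>'" "admissible p K0 \<Omega>"
  shows "admissible p K0 \<Omega>' \<and> (\<forall>k. \<Omega> k \<subseteq> \<Omega>' k)"
  using assms
proof (induction rule: rtranclp_induct)
  case (step \<Omega>1 \<Omega>2)
  then obtain M where M: "M \<subseteq> mesh K0 \<Omega>1" and \<Omega>2: "\<Omega>2 = refine_step p K0 \<Omega>1 M"
    unfolding refine_rel_def by blast
  have "admissible p K0 \<Omega>2" unfolding \<Omega>2 using admissible_refine_step[OF _ M] step by blast
  moreover have "\<Omega>1 k \<subseteq> \<Omega>2 k" for k unfolding \<Omega>2 by (rule refine_step_mono)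
  ultimately show ?case using step by blast
qed simp

lemma refinements_eq_admissible_finer:
  assumes "admissible p K0 \<Omega>"
  shows "refinements p K0 \<Omega> = {\<Omega>'. admissible p K0 \<Omega>' \<and> (\<forall>k. \<Omega> k \<subseteq> \<Omega>' k)}"
  using refinements_admissible_finer[OF _ assms] admissible_finer_mesh_reachable[OF _ assms]
  unfolding refinements_def by blast

lemma admissible_initial_mesh: "admissible p K0 initial_mesh"
proof -
  have "fst kT = 0" if "kT \<in> mesh K0 initial_mesh" for kT
    using that cell_nonempty by (auto simp: mesh_def initial_mesh_def split: if_splits)
  moreover have "hier_mesh K0 initial_mesh" unfolding hier_mesh_def initial_mesh_def by auto
  ultimately show ?thesis unfolding admissible_def neighbors_def by auto
qed

end

theorem proposition5p2:
  fixes p :: "'d::finite \<Rightarrow> nat" and K0 :: "'d \<Rightarrow> real list"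
  assumes "CARD('d) \<ge> 2"
    and "\<forall>i. 1 \<le> p i"
    and "\<forall>i. open_knots (p i) (K0 i)"
  shows "(\<forall>\<Omega>. admissible p K0 \<Omega> \<longrightarrow>
            refinements p K0 \<Omega> = {\<Omega>'. admissible p K0 \<Omega>' \<and> (\<forall>k. \<Omega> k \<subseteq> \<Omega>' k)})
       \<and> {\<Omega>. admissible p K0 \<Omega>} = refinements p K0 initial_mesh"
proof -
  interpret open_knot_vectors p K0 using assms(3) by unfold_locales
  have "initial_mesh k \<subseteq> \<Omega> k" if "admissible p K0 \<Omega>" for \<Omega> k
    using that hier_mesh_domain_0 by (auto simp: initial_mesh_def admissible_def)
  then have "{\<Omega>. admissible p K0 \<Omega>} = refinements p K0 initial_mesh"
    using refinements_eq_admissible_finer[OF admissible_initial_mesh] by auto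
  then show ?thesis using refinements_eq_admissible_finer by blast
qed

end
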